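(* The axioms I, II, III are mutually independent: for each $\mathsf X\in\{\mathrm I,\mathrm{II},\mathrm{III}\}$ there exists a pre-structural datum satisfying the two axioms other than $\mathsf X$ but failing $\mathsf X$. Moreover, the three subclauses (a), (b), (c) of Axiom III are mutually independent relative to Axioms I and II: for each of (a), (b), (c) there exists a pre-structural datum satisfying Axioms I and II and the other two subclauses of Axiom III, but failing that subclause.
   Context: For a nonempty set $X$, an algebra $\mathcal A\subseteq\mathcal P(X)$ contains $\varnothing,X$ and is closed under finite unions and complements. A finitely additive measure $\mu:\mathcal A\to[0,\infty)$ satisfies $\mu(\varnothing)=0$ and $\mu(B_1\sqcup B_2)=\mu(B_1)+\mu(B_2)$ for disjoint $B_1,B_2\in\mathcal A$. $\mathcal A\otimes\mathcal A$ denotes the algebra of subsets of $X\times X$ generated by rectangles $B_1\times B_2$ with $B_i\in\mathcal A$. For relations $H,K\subseteq X\times X$, $H\circ K=\{(x,z):\exists y\,(x,y)\in H,(y,z)\in K\}$. A pre-structural datum is a tuple $(X,\mathcal A,\mu,\mu^{\otimes2},R,I,\Pi_R,G,E_0,\eta)$ where: $X$ is a nonempty set; $\mathcal A$ is an algebra on $X$; $\mu$ is a finitely additive measure on $\mathcal A$; $\mu^{\otimes2}:\mathcal A\otimes\mathcal A\to[0,\infty)$ is finitely additive and satisfies $\mu^{\otimes2}(B_1\times B_2)=\mu(B_1)\mu(B_2)$ for all $B_1,B_2\in\mathcal A$; $R,I\in\mathcal A$ are disjoint; $\Pi_R:X\to R$ is a map; $G\subseteq X\times X$ with $G\in\mathcal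 A\otimes\mathcal A$; $E_0\in(0,\infty)$; $\eta\in[0,1]$. Axiom I: $\Pi_R\circ\Pi_R=\Pi_R$, $\Pi_R(r)=r$ for all $r\in R$, and $\Pi_R^{-1}(B)\in\mathcal A$ for every $B\in\mathcal A$ with $B\subseteq R$. Axiom II: $G$ is reflexive, symmetric, and $G\circ G=G$. Axiom III consists of: (a) conservation $\mu(R)+\mu(I)=E_0>0$; (b) projection–measure invariance $\mu(\Pi_R^{-1}(B))=\mu(B)$ for every $B\in\mathcal A$ with $B\subseteq R$; (c) coupling law: for all $B\in\mathcal A$, $\mu^{\otimes2}((B\times X)\cap G)=\mu(B)+\eta\,\mu^{\otimes2}((\Pi_R^{-1}(B)\times X)\cap G)$. *)

theory Defs
  imports "HOL-Analysis.Analysis"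
begin

definition fin_add_measure :: "'a set set \<Rightarrow> ('a set \<Rightarrow> real) \<Rightarrow> bool" where
  "fin_add_measure M m \<longleftrightarrow>
     (\<forall>B\<in>M. 0 \<le> m B) \<and> m {} = 0 \<and>
     (\<forall>B1\<in>M. \<forall>B2\<in>M. B1 \<inter> B2 = {} \<longrightarrow> m (B1 \<union> B2) = m B1 + m B2)"

definition prod_alg :: "'a set \<Rightarrow> 'a set set \<Rightarrow> ('a \<times> 'a) set set" where
  "prod_alg X A = \<Inter> {M. algebra (X \<times> X) M \<and>
      {B1 \<times> B2 | B1 B2. B1 \<in> A \<and> B2 \<in> A} \<subseteq> M}"

definition preim :: "'a set \<Rightarrow> ('a \<Rightarrow> 'a) \<Rightarrow> 'a set \<Rightarrow> 'a set" where
  "preim X P B = {x \<in> X. P x \<in> B}"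

definition pre_structural ::
  "'a set \<Rightarrow> 'a set set \<Rightarrow> ('a set \<Rightarrow> real) \<Rightarrow> (('a \<times> 'a) set \<Rightarrow> real) \<Rightarrow>
   'a set \<Rightarrow> 'a set \<Rightarrow> ('a \<Rightarrow> 'a) \<Rightarrow> ('a \<times> 'a) set \<Rightarrow> real \<Rightarrow> real \<Rightarrow> bool" where
  "pre_structural X A mu mu2 R I P G E0 eta \<longleftrightarrow>
     X \<noteq> {} \<and> algebra X A \<and> fin_add_measure A mu \<and>
     fin_add_measure (prod_alg X A) mu2 \<and>
     (\<forall>B1\<in>A. \<forall>B2\<in>A. mu2 (B1 \<times> B2) = mu B1 * mu B2) \<and>
     R \<in> A \<and> I \<in> A \<and> R \<inter> I = {} \<and>
     (\<forall>x\<in>X. P x \<in> R) \<and>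
     G \<subseteq> X \<times> X \<and> G \<in> prod_alg X A \<and>
     0 < E0 \<and> 0 \<le> eta \<and> eta \<le> 1"

definition axiom_I :: "'a set \<Rightarrow> 'a set set \<Rightarrow> 'a set \<Rightarrow> ('a \<Rightarrow> 'a) \<Rightarrow> bool" where
  "axiom_I X A R P \<longleftrightarrow>
     (\<forall>x\<in>X. P (P x) = P x) \<and> (\<forall>r\<in>R. P r = r) \<and>
     (\<forall>B\<in>A. B \<subseteq> R \<longrightarrow> preim X P B \<in> A)"

definition axiom_II :: "'a set \<Rightarrow> ('a \<times> 'a) set \<Rightarrow> bool" where
  "axiom_II X G \<longleftrightarrow> refl_on X G \<and> sym G \<and> G O G = G"

definition axiom_IIIa :: "('a set \<Rightarrow> real) \<Rightarrow> 'a set \<Rightarrow> 'a set \<Rightarrow> real \<Rightarrow> bool" where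
  "axiom_IIIa mu R I E0 \<longleftrightarrow> mu R + mu I = E0 \<and> E0 > 0"

text \<open>Axiom III (b): projection-measure invariance (the preimage is required to be
  measurable, so that its measure is defined).\<close>
definition axiom_IIIb :: "'a set \<Rightarrow> 'a set set \<Rightarrow> ('a set \<Rightarrow> real) \<Rightarrow> 'a set \<Rightarrow> ('a \<Rightarrow> 'a) \<Rightarrow> bool" where
  "axiom_IIIb X A mu R P \<longleftrightarrow>
     (\<forall>B\<in>A. B \<subseteq> R \<longrightarrow> preim X P B \<in> A \<and> mu (preim X P B) = mu B)"

definition axiom_IIIc ::
  "'a set \<Rightarrow> 'a set set \<Rightarrow> ('a set \<Rightarrow> real) \<Rightarrow> (('a \<times> 'a) set \<Rightarrow> real) \<Rightarrow>
   ('a \<Rightarrow> 'a) \<Rightarrow> ('a \<times> 'a) set \<Rightarrow> real \<Rightarrow> bool" where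
  "axiom_IIIc X A mu mu2 P G eta \<longleftrightarrow>
     (\<forall>B\<in>A. preim X P B \<in> A \<and>
        mu2 ((B \<times> X) \<inter> G) = mu B + eta * mu2 ((preim X P B \<times> X) \<inter> G))"

definition axiom_III where
  "axiom_III X A mu mu2 R I P G E0 eta \<longleftrightarrow>
     axiom_IIIa mu R I E0 \<and> axiom_IIIb X A mu R P \<and> axiom_IIIc X A mu mu2 P G eta"

end

theory Submission
  imports Defs
begin

text \<open>All six counter-models live on the two-point set \<open>X = {0, 1}\<close> with \<open>\<A> = Pow X\<close>
  and counting measures on \<open>X\<close> and \<open>X \<times> X\<close>. The baseline datum \<open>R = X\<close>, \<open>I = {}\<close>,
  \<open>\<Pi>\<^sub>R = id\<close>, \<open>G\<close> the diagonal, \<open>\<eta> = 0\<close>, \<open>E\<^sub>0 = 2\<close> satisfies every axiom: with \<open>\<eta> = 0\<close>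
  the coupling law holds as soon as \<open>G\<close> is the graph of a self-map of \<open>X\<close>, because
  \<open>(B \<times> X) \<inter> G\<close> is then in bijection with \<open>B\<close>. Each counter-model perturbs one
  ingredient: \<open>\<Pi>\<^sub>R\<close> the swap (measure preserving, but not the identity on \<open>R\<close>); \<open>G\<close> the
  graph of the swap (not reflexive); \<open>E\<^sub>0 = 3\<close>; \<open>R = {0}\<close> with \<open>\<Pi>\<^sub>R\<close> constant (the
  preimage of \<open>{0}\<close> is all of \<open>X\<close>); \<open>\<eta> = 1/2\<close> (the coupling law fails at \<open>B = X\<close>).
  Axiom III as a whole fails exactly when one of its clauses does, so the model for
  III(a) also separates Axiom III.\<close>

definition card_measure :: "'a set \<Rightarrow> real" where
  "card_measure B = real (card B)"

lemma fin_add_measure_card_measure: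
  assumes "finite X" "M \<subseteq> Pow X"
  shows "fin_add_measure M card_measure"
proof -
  have "finite B" if "B \<in> M" for B
    using that assms finite_subset by blast
  then show ?thesis
    unfolding fin_add_measure_def card_measure_def by (auto simp: card_Un_disjoint)
qed

lemma finite_in_prod_alg_Pow:
  assumes "finite G" "G \<subseteq> X \<times> X"
  shows "G \<in> prod_alg X (Pow X)"
  unfolding prod_alg_def
proof (rule InterI, clarify)
  fix M assume alg: "algebra (X \<times> X) M"
    and rect: "{B1 \<times> B2 |B1 B2. B1 \<in> Pow X \<and> B2 \<in> Pow X} \<subseteq> M"
  interpret algebra "X \<times> X" M by (rule alg)
  show "G \<in> M"
    using assms
  proof (induction G rule: finite_induct)
    case (insert x F)
    obtain a b where x: "x = (a, b)" by force
    have "{a} \<subseteq> X" "{b} \<subseteq> X"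
      using insert.prems x by auto
    then have "{a} \<times> {b} \<in> M"
      using rect by blast
    moreover have "F \<in> M"
      using insert by blast
    ultimately have "{a} \<times> {b} \<union> F \<in> M"
      by (rule Un)
    then show ?case
      using x by simp
  qed simp
qed

lemma prod_alg_Pow_finite:
  assumes "finite X"
  shows "prod_alg X (Pow X) = Pow (X \<times> X)"
proof
  show "prod_alg X (Pow X) \<subseteq> Pow (X \<times> X)"
    unfolding prod_alg_def by (rule Inter_lower) (simp add: algebra_Pow, blast)
  show "Pow (X \<times> X) \<subseteq> prod_alg X (Pow X)"
  proof
    fix G assume "G \<in> Pow (X \<times> X)"
    moreover from this have "finite G"
      using assms finite_subset by blast
    ultimately show "G \<in> prod_alg X (Pow X)"
      by (simp add: finite_in_prod_alg_Pow)
  qed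
qed

lemma pre_structural_card_measure:
  assumes "finite X" "X \<noteq> {}" "R \<subseteq> X" "I \<subseteq> X" "R \<inter> I = {}" "P ` X \<subseteq> R"
    "G \<subseteq> X \<times> X" "0 < E0" "0 \<le> eta" "eta \<le> 1"
  shows "pre_structural X (Pow X) card_measure card_measure R I P G E0 eta"
  using assms algebra_Pow[of X] prod_alg_Pow_finite[OF \<open>finite X\<close>]
    fin_add_measure_card_measure[OF \<open>finite X\<close>, of "Pow X"]
    fin_add_measure_card_measure[of "X \<times> X" "Pow (X \<times> X)"]
  unfolding pre_structural_def
  by (auto simp: card_measure_def card_cartesian_product)

lemma axiom_I_id: "axiom_I X (Pow X) X id"
  unfolding axiom_I_def preim_def by auto

lemma axiom_I_const: "axiom_I X (Pow X) {r} (\<lambda>_. r)"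
  unfolding axiom_I_def preim_def by auto

lemma axiom_II_Id_on: "axiom_II X (Id_on X)"
  unfolding axiom_II_def by (auto simp: refl_on_def sym_def)

lemma axiom_IIIb_bij:
  assumes "bij_betw P X X"
  shows "axiom_IIIb X (Pow X) card_measure X P"
  unfolding axiom_IIIb_def
proof (intro ballI impI conjI)
  fix B assume "B \<subseteq> X"
  then have "bij_betw P (preim X P B) B"
    using assms unfolding preim_def bij_betw_def inj_on_def by auto
  then show "card_measure (preim X P B) = card_measure B"
    unfolding card_measure_def by (simp add: bij_betw_same_card)
qed (auto simp: preim_def)

lemma axiom_IIIc_graph:
  assumes "f ` X \<subseteq> X"
  shows "axiom_IIIc X (Pow X) card_measure card_measure P ((\<lambda>x. (x, f x)) ` X) 0"
  unfolding axiom_IIIc_def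
proof (intro ballI conjI)
  fix B assume "B \<in> Pow X"
  then have "(B \<times> X) \<inter> (\<lambda>x. (x, f x)) ` X = (\<lambda>x. (x, f x)) ` B"
    using assms by auto
  moreover have "card ((\<lambda>x. (x, f x)) ` B) = card B"
    by (rule card_image) (auto simp: inj_on_def)
  ultimately show "card_measure ((B \<times> X) \<inter> (\<lambda>x. (x, f x)) ` X) =
      card_measure B + 0 * card_measure ((preim X P B \<times> X) \<inter> (\<lambda>x. (x, f x)) ` X)"
    by (simp add: card_measure_def)
qed (auto simp: preim_def)

lemma Id_on_eq_graph: "Id_on X = (\<lambda>x. (x, x)) ` X"
  by auto

lemma axiom_IIIc_Id_on: "axiom_IIIc X (Pow X) card_measure card_measure P (Id_on X) 0"
  using axiom_IIIc_graph[of id X P] by (simp add: Id_on_eq_graph)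

lemma not_axiom_IIIb_const:
  assumes "finite X" "r \<in> X" "X \<noteq> {r}"
  shows "\<not> axiom_IIIb X (Pow X) card_measure {r} (\<lambda>_. r)"
proof
  assume "axiom_IIIb X (Pow X) card_measure {r} (\<lambda>_. r)"
  then have "card X = card {r}"
    using \<open>r \<in> X\<close> by (auto simp: axiom_IIIb_def preim_def card_measure_def)
  then show False
    using assms by (auto simp: card_1_singleton_iff)
qed

lemma not_axiom_IIIc_Id_on:
  assumes "finite X" "X \<noteq> {}" "eta \<noteq> 0"
  shows "\<not> axiom_IIIc X (Pow X) card_measure card_measure id (Id_on X) eta"
proof
  assume "axiom_IIIc X (Pow X) card_measure card_measure id (Id_on X) eta"
  then have "card_measure ((X \<times> X) \<inter> Id_on X) =
      card_measure X + eta * card_measure ((preim X id X \<times> X) \<inter> Id_on X)"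
    unfolding axiom_IIIc_def by blast
  moreover have "preim X id X = X" and "(X \<times> X) \<inter> Id_on X = Id_on X"
    by (auto simp: preim_def)
  moreover have "card_measure (Id_on X) = card_measure X"
    by (simp add: Id_on_eq_graph card_measure_def card_image inj_on_def)
  moreover have "card_measure X \<noteq> 0"
    using assms by (simp add: card_measure_def)
  ultimately show False
    using assms by simp
qed

lemma pre_structural_two_point:
  assumes "R \<subseteq> {0, 1}" "I \<subseteq> {0, 1}" "R \<inter> I = {}" "P ` {0, 1} \<subseteq> R"
    "G \<subseteq> {0, 1} \<times> {0, 1}" "0 < E0" "0 \<le> eta" "eta \<le> 1"
  shows "pre_structural {0::nat, 1} (Pow {0, 1}) card_measure card_measure R I P G E0 eta"
  using assms by (intro pre_structural_card_measure) auto

lemma axiom_I_independent: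
  "\<exists>(X::nat set) A mu mu2 R I P G E0 eta.
      pre_structural X A mu mu2 R I P G E0 eta \<and>
      \<not> axiom_I X A R P \<and> axiom_II X G \<and> axiom_III X A mu mu2 R I P G E0 eta"
proof -
  let ?X = "{0::nat, 1}" and ?swap = "\<lambda>x::nat. 1 - x"
  have "bij_betw ?swap ?X ?X"
    by (auto simp: bij_betw_def inj_on_def)
  then have "axiom_III ?X (Pow ?X) card_measure card_measure ?X {} ?swap (Id_on ?X) 2 0"
    by (simp add: axiom_III_def axiom_IIIa_def card_measure_def axiom_IIIb_bij axiom_IIIc_Id_on)
  moreover have "\<not> axiom_I ?X (Pow ?X) ?X ?swap"
    by (auto simp: axiom_I_def)
  moreover have "pre_structural ?X (Pow ?X) card_measure card_measure ?X {} ?swap (Id_on ?X) 2 0"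
    by (rule pre_structural_two_point) auto
  ultimately show ?thesis
    using axiom_II_Id_on by blast
qed

lemma axiom_II_independent:
  "\<exists>(X::nat set) A mu mu2 R I P G E0 eta.
      pre_structural X A mu mu2 R I P G E0 eta \<and>
      axiom_I X A R P \<and> \<not> axiom_II X G \<and> axiom_III X A mu mu2 R I P G E0 eta"
proof -
  let ?X = "{0::nat, 1}"
  let ?G = "(\<lambda>x. (x, 1 - x)) ` ?X"
  have "axiom_III ?X (Pow ?X) card_measure card_measure ?X {} id ?G 2 0"
    using axiom_IIIb_bij[OF bij_betw_id] axiom_IIIc_graph[of "\<lambda>x. 1 - x" ?X id]
    by (auto simp: axiom_III_def axiom_IIIa_def card_measure_def)
  moreover have "\<not> axiom_II ?X ?G"
    by (auto simp: axiom_II_def refl_on_def)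
  moreover have "pre_structural ?X (Pow ?X) card_measure card_measure ?X {} id ?G 2 0"
    by (rule pre_structural_two_point) auto
  ultimately show ?thesis
    using axiom_I_id by blast
qed

lemma axiom_IIIa_independent:
  "\<exists>(X::nat set) A mu mu2 R I P G E0 eta.
      pre_structural X A mu mu2 R I P G E0 eta \<and>
      axiom_I X A R P \<and> axiom_II X G \<and>
      \<not> axiom_IIIa mu R I E0 \<and> axiom_IIIb X A mu R P \<and> axiom_IIIc X A mu mu2 P G eta"
proof -
  let ?X = "{0::nat, 1}"
  have "\<not> axiom_IIIa card_measure ?X {} 3"
    by (simp add: axiom_IIIa_def card_measure_def)
  moreover have "pre_structural ?X (Pow ?X) card_measure card_measure ?X {} id (Id_on ?X) 3 0"
    by (rule pre_structural_two_point) auto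
  ultimately show ?thesis
    using axiom_I_id axiom_II_Id_on axiom_IIIb_bij[OF bij_betw_id] axiom_IIIc_Id_on by blast
qed

lemma axiom_IIIb_independent:
  "\<exists>(X::nat set) A mu mu2 R I P G E0 eta.
      pre_structural X A mu mu2 R I P G E0 eta \<and>
      axiom_I X A R P \<and> axiom_II X G \<and>
      axiom_IIIa mu R I E0 \<and> \<not> axiom_IIIb X A mu R P \<and> axiom_IIIc X A mu mu2 P G eta"
proof -
  let ?X = "{0::nat, 1}"
  have "axiom_IIIa card_measure {0} {1} 2"
    by (simp add: axiom_IIIa_def card_measure_def)
  moreover have "\<not> axiom_IIIb ?X (Pow ?X) card_measure {0} (\<lambda>_. 0)"
    by (rule not_axiom_IIIb_const) auto
  moreover have "pre_structural ?X (Pow ?X) card_measure card_measure {0} {1} (\<lambda>_. 0) (Id_on ?X) 2 0"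
    by (rule pre_structural_two_point) auto
  ultimately show ?thesis
    using axiom_I_const[of ?X 0] axiom_II_Id_on[of ?X] axiom_IIIc_Id_on[of ?X "\<lambda>_. 0"]
    by blast
qed

lemma axiom_IIIc_independent:
  "\<exists>(X::nat set) A mu mu2 R I P G E0 eta.
      pre_structural X A mu mu2 R I P G E0 eta \<and>
      axiom_I X A R P \<and> axiom_II X G \<and>
      axiom_IIIa mu R I E0 \<and> axiom_IIIb X A mu R P \<and> \<not> axiom_IIIc X A mu mu2 P G eta"
proof -
  let ?X = "{0::nat, 1}"
  have "axiom_IIIa card_measure ?X {} 2"
    by (simp add: axiom_IIIa_def card_measure_def)
  moreover have "\<not> axiom_IIIc ?X (Pow ?X) card_measure card_measure id (Id_on ?X) (1/2)"
    by (rule not_axiom_IIIc_Id_on) auto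
  moreover have "pre_structural ?X (Pow ?X) card_measure card_measure ?X {} id (Id_on ?X) 2 (1/2)"
    by (rule pre_structural_two_point) auto
  ultimately show ?thesis
    using axiom_I_id axiom_II_Id_on axiom_IIIb_bij[OF bij_betw_id] by blast
qed

theorem theorem6p7:
  shows
  "\<comment> \<open>Axiom I is independent of II and III\<close>
   (\<exists>(X::nat set) A mu mu2 R I P G E0 eta.
      pre_structural X A mu mu2 R I P G E0 eta \<and>
      \<not> axiom_I X A R P \<and> axiom_II X G \<and> axiom_III X A mu mu2 R I P G E0 eta) \<and>
   \<comment> \<open>Axiom II is independent of I and III\<close>
   (\<exists>(X::nat set) A mu mu2 R I P G E0 eta.
      pre_structural X A mu mu2 R I P G E0 eta \<and>
      axiom_I X A R P \<and> \<not> axiom_II X G \<and> axiom_III X A mu mu2 R I P G E0 eta) \<and>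
   \<comment> \<open>Axiom III is independent of I and II\<close>
   (\<exists>(X::nat set) A mu mu2 R I P G E0 eta.
      pre_structural X A mu mu2 R I P G E0 eta \<and>
      axiom_I X A R P \<and> axiom_II X G \<and> \<not> axiom_III X A mu mu2 R I P G E0 eta) \<and>
   \<comment> \<open>III(a) is independent of I, II, III(b), III(c)\<close>
   (\<exists>(X::nat set) A mu mu2 R I P G E0 eta.
      pre_structural X A mu mu2 R I P G E0 eta \<and>
      axiom_I X A R P \<and> axiom_II X G \<and>
      \<not> axiom_IIIa mu R I E0 \<and> axiom_IIIb X A mu R P \<and> axiom_IIIc X A mu mu2 P G eta) \<and>
   \<comment> \<open>III(b) is independent of I, II, III(a), III(c)\<close>
   (\<exists>(X::nat set) A mu mu2 R I P G E0 eta.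
      pre_structural X A mu mu2 R I P G E0 eta \<and>
      axiom_I X A R P \<and> axiom_II X G \<and>
      axiom_IIIa mu R I E0 \<and> \<not> axiom_IIIb X A mu R P \<and> axiom_IIIc X A mu mu2 P G eta) \<and>
   \<comment> \<open>III(c) is independent of I, II, III(a), III(b)\<close>
   (\<exists>(X::nat set) A mu mu2 R I P G E0 eta.
      pre_structural X A mu mu2 R I P G E0 eta \<and>
      axiom_I X A R P \<and> axiom_II X G \<and>
      axiom_IIIa mu R I E0 \<and> axiom_IIIb X A mu R P \<and> \<not> axiom_IIIc X A mu mu2 P G eta)"
  using axiom_I_independent axiom_II_independent axiom_IIIa_independent
    axiom_IIIb_independent axiom_IIIc_independent
  unfolding axiom_III_def by blast

end
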